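(* Let $X$ be a compact metric countable space and $f:X\to X$ a continuous function such that every accumulation point of $X$ is periodic. Let $a$ be an accumulation point of $X$ and $(a_n)_{n\in\mathbb N}$ a sequence in $X$ such that $f^p(a_n)\to f^p(a)$ for some $p\in\mathbb N^*$. If $b\in X$ is a periodic point with $b\in\bigcap_{n\in\mathbb N}\overline{\mathcal O_f(a_n)}$, then $b\in\mathcal O_f(a)$.
   Context: $\mathbb N^*$ denotes the set of free ultrafilters on $\mathbb N$. For $p\in\mathbb N^*$, the $p$-iterate $f^p:X\to X$ is defined by $f^p(x)=p\text{-}\lim_{n\to\infty}f^n(x)$, where $y=p\text{-}\lim x_n$ means $\{n: x_n\in V\}\in p$ for every neighborhood $V$ of $y$. The orbit of $x$ is $\mathcal O_f(x)=\{f^n(x):n\in\mathbb N\}$. A point $x$ is periodic if $f^n(x)=x$ for some $n\ge1$. An accumulation point is a non-isolated point. *)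

theory Defs
  imports "HOL-Analysis.Analysis"
begin

definition free_ultrafilter :: "nat filter \<Rightarrow> bool" where
  "free_ultrafilter p \<longleftrightarrow> p \<noteq> bot
     \<and> (\<forall>P. eventually P p \<or> eventually (\<lambda>n. \<not> P n) p)
     \<and> (\<forall>m. \<not> eventually (\<lambda>n. n = m) p)"

definition p_iterate :: "nat filter \<Rightarrow> ('a::t2_space \<Rightarrow> 'a) \<Rightarrow> 'a \<Rightarrow> 'a" where
  "p_iterate p f x = Lim p (\<lambda>n. (f ^^ n) x)"

definition orbit :: "('a \<Rightarrow> 'a) \<Rightarrow> 'a \<Rightarrow> 'a set" where
  "orbit f x = {(f ^^ n) x | n. True}"

definition periodic_pt :: "('a \<Rightarrow> 'a) \<Rightarrow> 'a \<Rightarrow> bool" where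
  "periodic_pt f x \<longleftrightarrow> (\<exists>n\<ge>1. (f ^^ n) x = x)"

end

theory Submission
  imports Defs
begin

(* Every point of the omega-limit set omega(x) of a point x of X is periodic: accumulation points
   of X by hypothesis, isolated points of X because the orbit of x must return to them.  Being
   compact and countable, omega(x) has an isolated point y (Baire), and then the finite orbit of y
   is relatively open in omega(x).  An omega-limit set admits no splitting into a nonempty
   forward-invariant closed and relatively open part C and a nonempty rest: the orbit of x would
   enter a neighbourhood W of C and leave it infinitely often, and the exit points would
   accumulate at a point of omega(x) near C but outside W.  Hence omega(x) is the orbit of y.
   Now f^p(x) lies in omega(x) for every x, and omega(a_n) contains the periodic point b of the
   closure of the orbit of a_n, so f^p(a_n) lies on the finite orbit of b, and so does its limit
   f^p(a).  As a is periodic, f^p(a) lies on the orbit of a, and b lies on the orbit of f^p(a). *)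

lemma orbit_eq_range: "orbit f x = range (\<lambda>n. (f ^^ n) x)"
  unfolding orbit_def by (simp add: full_SetCompr_eq)

lemma funpow_in_orbit [intro]: "(f ^^ n) x \<in> orbit f x"
  unfolding orbit_def by blast

lemma orbit_refl [simp]: "x \<in> orbit f x"
  using funpow_in_orbit[where n=0] by simp

lemma orbit_subset_orbit:
  assumes "y \<in> orbit f x"
  shows "orbit f y \<subseteq> orbit f x"
  using assms unfolding orbit_def by (auto simp flip: funpow_add[THEN fun_cong, unfolded comp_apply])

lemma image_orbit_subset: "f ` orbit f x \<subseteq> orbit f x"
proof -
  have "f ((f ^^ n) x) = (f ^^ Suc n) x" for n
    by simp
  then show ?thesis
    unfolding orbit_def by blast
qed

lemma orbit_subset_invariant:
  assumes "f ` S \<subseteq> S" "x \<in> S"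
  shows "orbit f x \<subseteq> S"
proof -
  have "(f ^^ n) x \<in> S" for n
    by (induction n) (use assms in auto)
  then show ?thesis
    unfolding orbit_def by blast
qed

lemma funpow_mult_fixpoint:
  assumes "(f ^^ m) x = x"
  shows "(f ^^ (m * t)) x = x"
  using assms by (induction t) (simp_all add: funpow_add)

lemma periodic_pt_orbit_finite:
  assumes "periodic_pt f x"
  shows "finite (orbit f x)"
proof -
  obtain m where "m \<ge> 1" and m: "(f ^^ m) x = x"
    using assms unfolding periodic_pt_def by blast
  have "(f ^^ n) x = (f ^^ (n mod m)) ((f ^^ (m * (n div m))) x)" for n
    by (simp flip: funpow_add[THEN fun_cong, unfolded comp_apply])
  then have "(f ^^ n) x = (f ^^ (n mod m)) x" for n
    by (simp add: funpow_mult_fixpoint[OF m])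
  then have "orbit f x \<subseteq> (\<lambda>j. (f ^^ j) x) ` {..<m}"
    using \<open>m \<ge> 1\<close> unfolding orbit_def
    by clarify (metis image_eqI lessThan_iff mod_less_divisor less_le_trans zero_less_one)
  then show ?thesis
    using finite_subset by blast
qed

lemma periodic_pt_in_orbit:
  assumes "periodic_pt f x" "y \<in> orbit f x"
  shows "x \<in> orbit f y"
proof -
  obtain m where "m \<ge> 1" and m: "(f ^^ m) x = x"
    using assms(1) unfolding periodic_pt_def by blast
  obtain i where y: "y = (f ^^ i) x"
    using assms(2) unfolding orbit_def by blast
  have "(f ^^ (m * i - i)) y = (f ^^ (m * i)) x"
    using \<open>m \<ge> 1\<close> by (simp add: y flip: funpow_add[THEN fun_cong, unfolded comp_apply])
  then show ?thesis
    using funpow_mult_fixpoint[OF m] by (metis funpow_in_orbit)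
qed

lemma periodic_pt_orbit_eq:
  assumes "periodic_pt f x" "y \<in> orbit f x"
  shows "orbit f y = orbit f x"
  using assms by (meson orbit_subset_orbit periodic_pt_in_orbit subset_antisym)

definition omega_limit_set :: "('a \<Rightarrow> 'a) \<Rightarrow> 'a \<Rightarrow> 'a::topological_space set" where
  "omega_limit_set f x = (\<Inter>N. closure ((\<lambda>n. (f ^^ n) x) ` {N..}))"

lemma omega_limit_set_iff:
  "z \<in> omega_limit_set f x \<longleftrightarrow>
     (\<forall>T. open T \<longrightarrow> z \<in> T \<longrightarrow> (\<exists>\<^sub>F n in sequentially. (f ^^ n) x \<in> T))"
proof -
  have "z \<in> closure ((\<lambda>n. (f ^^ n) x) ` {N..}) \<longleftrightarrow>
      (\<forall>T. open T \<longrightarrow> z \<in> T \<longrightarrow> (\<exists>n\<ge>N. (f ^^ n) x \<in> T))" for N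
    unfolding closure_iff_nhds_not_empty by blast
  then show ?thesis
    unfolding omega_limit_set_def frequently_sequentially by blast
qed

lemma frequently_sequentially_Suc:
  "(\<exists>\<^sub>F n in sequentially. P (Suc n)) \<longleftrightarrow> (\<exists>\<^sub>F n in sequentially. P n)"
  using eventually_sequentially_Suc[of "\<lambda>n. \<not> P n"] by (simp add: frequently_def)

lemma closed_omega_limit_set [intro]: "closed (omega_limit_set f x)"
  unfolding omega_limit_set_def by blast

lemma omega_limit_set_subset_closure_orbit: "omega_limit_set f x \<subseteq> closure (orbit f x)"
proof -
  have "(\<lambda>n. (f ^^ n) x) ` {0..} \<subseteq> orbit f x"
    by blast
  then show ?thesis
    unfolding omega_limit_set_def by (meson INF_lower2 UNIV_I closure_mono)
qed

lemma omega_limit_set_subset: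
  assumes "closed S" "f ` S \<subseteq> S" "x \<in> S"
  shows "omega_limit_set f x \<subseteq> S"
  using omega_limit_set_subset_closure_orbit closure_minimal orbit_subset_invariant assms
  by (metis subset_trans)

lemma omega_limit_set_invariant:
  assumes "continuous_on S f" "closed S" "f ` S \<subseteq> S" "x \<in> S"
  shows "f ` omega_limit_set f x \<subseteq> omega_limit_set f x"
proof
  fix w
  assume "w \<in> f ` omega_limit_set f x"
  then obtain z where z: "z \<in> omega_limit_set f x" and w: "w = f z"
    by blast
  show "w \<in> omega_limit_set f x"
    unfolding omega_limit_set_iff
  proof (intro allI impI)
    fix T
    assume "open T" "w \<in> T"
    obtain A where "open A" and A: "A \<inter> S = f -` T \<inter> S"
      using assms(1) \<open>open T\<close> unfolding continuous_on_open_invariant by blast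
    have "z \<in> S"
      using omega_limit_set_subset[OF assms(2-4)] z by blast
    then have "z \<in> A"
      using A \<open>w \<in> T\<close> w by blast
    then have "\<exists>\<^sub>F n in sequentially. (f ^^ n) x \<in> A"
      using z \<open>open A\<close> omega_limit_set_iff[of z f x] by blast
    then have "\<exists>\<^sub>F n in sequentially. (f ^^ Suc n) x \<in> T"
    proof (rule frequently_elim1)
      fix n
      assume "(f ^^ n) x \<in> A"
      moreover have "(f ^^ n) x \<in> S"
        using orbit_subset_invariant[OF assms(3,4)] by blast
      ultimately show "(f ^^ Suc n) x \<in> T"
        using A by auto
    qed
    then show "\<exists>\<^sub>F n in sequentially. (f ^^ n) x \<in> T"
      using frequently_sequentially_Suc[of "\<lambda>n. (f ^^ n) x \<in> T"] by blast
  qed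
qed

lemma omega_limit_set_meets_compact:
  assumes "compact K" "\<exists>\<^sub>F n in sequentially. (f ^^ n) x \<in> K"
  shows "omega_limit_set f x \<inter> K \<noteq> {}"
proof
  assume disjoint: "omega_limit_set f x \<inter> K = {}"
  have "\<exists>T. open T \<and> z \<in> T \<and> (\<forall>\<^sub>F n in sequentially. (f ^^ n) x \<notin> T)" if "z \<in> K" for z
  proof -
    have "z \<notin> omega_limit_set f x"
      using disjoint that by blast
    then show ?thesis
      unfolding omega_limit_set_iff not_frequently[symmetric] by blast
  qed
  then obtain T where T: "\<And>z. z \<in> K \<Longrightarrow> open (T z) \<and> z \<in> T z"
    and ev: "\<And>z. z \<in> K \<Longrightarrow> \<forall>\<^sub>F n in sequentially. (f ^^ n) x \<notin> T z"
    by metis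
  obtain D where "D \<subseteq> K" "finite D" and cover: "K \<subseteq> (\<Union>z\<in>D. T z)"
    by (rule compactE_image[OF assms(1), of K T]) (use T in blast)+
  then have "\<forall>\<^sub>F n in sequentially. \<forall>z\<in>D. (f ^^ n) x \<notin> T z"
    using ev by (intro eventually_ball_finite) auto
  then have "\<forall>\<^sub>F n in sequentially. (f ^^ n) x \<notin> K"
    by (rule eventually_mono) (use cover in blast)
  then show False
    using assms(2) by (simp add: frequently_def)
qed

lemma periodic_pt_in_omega_limit_set:
  fixes x :: "'a::t1_space"
  assumes "periodic_pt f z" "z \<in> closure (orbit f x)"
  shows "z \<in> omega_limit_set f x"
  unfolding omega_limit_set_def
proof
  fix N
  obtain m where "m \<ge> 1" and m: "(f ^^ m) z = z"
    using assms(1) unfolding periodic_pt_def by blast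
  have "{..<N} \<union> {N..} = (UNIV :: nat set)"
    by auto
  then have "orbit f x = (\<lambda>n. (f ^^ n) x) ` {..<N} \<union> (\<lambda>n. (f ^^ n) x) ` {N..}"
    unfolding orbit_eq_range by (metis image_Un)
  then have "closure (orbit f x) = (\<lambda>n. (f ^^ n) x) ` {..<N} \<union> closure ((\<lambda>n. (f ^^ n) x) ` {N..})"
    by (simp add: finite_imp_closed)
  then have "z \<in> (\<lambda>n. (f ^^ n) x) ` {..<N} \<or> z \<in> closure ((\<lambda>n. (f ^^ n) x) ` {N..})"
    using assms(2) by (simp only: Un_iff)
  then consider i where "z = (f ^^ i) x" | "z \<in> closure ((\<lambda>n. (f ^^ n) x) ` {N..})"
    by blast
  then show "z \<in> closure ((\<lambda>n. (f ^^ n) x) ` {N..})"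
  proof cases
    case (1 i)
    have "(f ^^ (m * N + i)) x = (f ^^ (m * N)) ((f ^^ i) x)"
      by (simp add: funpow_add)
    also have "\<dots> = z"
      using 1 funpow_mult_fixpoint[OF m, of N] by simp
    finally have "z = (f ^^ (m * N + i)) x" ..
    moreover have "N \<le> m * N + i"
      using \<open>m \<ge> 1\<close> by (simp add: trans_le_add1)
    ultimately have "z \<in> (\<lambda>n. (f ^^ n) x) ` {N..}"
      by (intro image_eqI[where x = "m * N + i"]) simp_all
    then show ?thesis
      by (rule subsetD[OF closure_subset])
  qed
qed

lemma periodic_pt_if_isolated_in_omega_limit_set:
  assumes "z \<in> omega_limit_set f x" "\<not> z islimpt S" "orbit f x \<subseteq> S"
  shows "periodic_pt f z"
proof -
  obtain T where "open T" "z \<in> T" and T: "\<And>y. y \<in> S \<Longrightarrow> y \<in> T \<Longrightarrow> y = z"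
    using assms(2) unfolding islimpt_def by blast
  then have "\<exists>\<^sub>F n in sequentially. (f ^^ n) x \<in> T"
    using assms(1) omega_limit_set_iff[of z f x] by blast
  then have returns: "\<exists>\<^sub>F n in sequentially. (f ^^ n) x = z"
    by (rule frequently_elim1) (use T assms(3) in blast)
  then obtain i where i: "(f ^^ i) x = z"
    unfolding frequently_sequentially by blast
  obtain j where "j \<ge> Suc i" and j: "(f ^^ j) x = z"
    using returns unfolding frequently_sequentially by blast
  have "(f ^^ (j - i)) z = (f ^^ (j - i + i)) x"
    by (simp add: i[symmetric] funpow_add)
  also have "\<dots> = z"
    using \<open>j \<ge> Suc i\<close> j by simp
  finally show ?thesis
    unfolding periodic_pt_def using \<open>j \<ge> Suc i\<close> by (intro exI[of _ "j - i"]) simp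
qed

lemma frequently_transition:
  fixes P :: "nat \<Rightarrow> bool"
  assumes "\<exists>\<^sub>F n in sequentially. P n" "\<exists>\<^sub>F n in sequentially. \<not> P n"
  shows "\<exists>\<^sub>F n in sequentially. P n \<and> \<not> P (Suc n)"
  unfolding frequently_sequentially
proof
  fix N
  obtain i where "i \<ge> N" "P i"
    using assms(1) unfolding frequently_sequentially by blast
  obtain j where "j \<ge> i" "\<not> P j"
    using assms(2) unfolding frequently_sequentially by blast
  show "\<exists>n\<ge>N. P n \<and> \<not> P (Suc n)"
  proof (rule ccontr)
    assume no_transition: "\<not> ?thesis"
    have "P n" if "i \<le> n" for n
      using that by (induction n rule: dec_induct) (use \<open>i \<ge> N\<close> \<open>P i\<close> no_transition in auto)
    then show False
      using \<open>j \<ge> i\<close> \<open>\<not> P j\<close> by blast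
  qed
qed

lemma closed_subset_compact: "compact S \<Longrightarrow> closed T \<Longrightarrow> T \<subseteq> S \<Longrightarrow> compact T"
  by (metis compact_Int_closed inf.absorb2)

lemma compact_Diff_openin:
  assumes "compact S" "openin (top_of_set S) C"
  shows "compact (S - C)"
proof -
  obtain G where "open G" "C = S \<inter> G"
    using assms(2) unfolding openin_open by blast
  then have "S - C = S \<inter> - G"
    by blast
  then show ?thesis
    using assms(1) \<open>open G\<close> by (simp add: compact_Int_closed closed_Compl)
qed

lemma Hausdorff_space_euclidean_t2: "Hausdorff_space (euclidean :: 'a::t2_space topology)"
  unfolding Hausdorff_space_def disjnt_def by (simp add: separation_t2)

lemma compact_separation:
  fixes S T :: "'a::t2_space set"
  assumes "compact S" "compact T" "S \<inter> T = {}"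
  obtains U V where "open U" "open V" "S \<subseteq> U" "T \<subseteq> V" "U \<inter> V = {}"
  using Hausdorff_space_compact_separation[OF Hausdorff_space_euclidean_t2] assms
  by (metis compactin_euclidean_iff disjnt_def open_openin)

lemma omega_limit_set_meets_exits:
  assumes X: "compact X" "f ` X \<subseteq> X" "x \<in> X"
    and "open W" "closed E" "f ` (W \<inter> X) \<subseteq> E"
    and "\<exists>\<^sub>F n in sequentially. (f ^^ n) x \<in> W" "\<exists>\<^sub>F n in sequentially. (f ^^ n) x \<notin> W"
  shows "omega_limit_set f x \<inter> (X \<inter> E - W) \<noteq> {}"
proof -
  define xs where "xs n = (f ^^ n) x" for n
  have xs_X: "xs n \<in> X" for n
    using orbit_subset_invariant[OF X(2,3)] unfolding xs_def by blast
  have "compact (X \<inter> E - W)"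
    using X(1) \<open>closed E\<close> \<open>open W\<close> by (simp add: Diff_eq compact_Int_closed closed_Int closed_Compl)
  have "\<exists>\<^sub>F n in sequentially. xs n \<in> W \<and> xs (Suc n) \<notin> W"
    using assms(7,8) unfolding xs_def by (rule frequently_transition)
  then have "\<exists>\<^sub>F n in sequentially. xs (Suc n) \<in> X \<inter> E - W"
  proof (rule frequently_elim1)
    fix n
    assume n: "xs n \<in> W \<and> xs (Suc n) \<notin> W"
    have "xs (Suc n) = f (xs n)"
      by (simp add: xs_def)
    also have "\<dots> \<in> E"
      using assms(6) n xs_X by blast
    finally show "xs (Suc n) \<in> X \<inter> E - W"
      using n xs_X by blast
  qed
  then have "\<exists>\<^sub>F n in sequentially. (f ^^ n) x \<in> X \<inter> E - W"
    using frequently_sequentially_Suc[of "\<lambda>n. (f ^^ n) x \<in> X \<inter> E - W"] unfolding xs_def by blast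
  then show ?thesis
    by (rule omega_limit_set_meets_compact[OF \<open>compact (X \<inter> E - W)\<close>])
qed

lemma omega_limit_set_eq_invariant_openin:
  fixes f :: "'a::t2_space \<Rightarrow> 'a"
  assumes X: "compact X" "continuous_on X f" "f ` X \<subseteq> X" "x \<in> X"
    and C: "closed C" "f ` C \<subseteq> C" "C \<subseteq> omega_limit_set f x" "C \<noteq> {}"
    and openin_C: "openin (top_of_set (omega_limit_set f x)) C"
  shows "omega_limit_set f x = C"
proof (rule ccontr)
  let ?\<omega> = "omega_limit_set f x"
  have \<omega>_X: "?\<omega> \<subseteq> X"
    by (rule omega_limit_set_subset[OF compact_imp_closed[OF X(1)] X(3,4)])
  assume "?\<omega> \<noteq> C"
  then obtain d where d: "d \<in> ?\<omega> - C"
    using C(3) by blast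
  have "compact ?\<omega>"
    using closed_subset_compact[OF X(1) closed_omega_limit_set \<omega>_X] .
  then have "compact (?\<omega> - C)"
    using openin_C by (rule compact_Diff_openin)
  moreover have "compact C"
    using closed_subset_compact[OF X(1) C(1)] C(3) \<omega>_X by blast
  ultimately obtain U V where "open U" "open V" "C \<subseteq> U" "?\<omega> - C \<subseteq> V" "U \<inter> V = {}"
    using compact_separation[of C "?\<omega> - C"] by blast
  obtain A where "open A" and A: "A \<inter> X = f -` U \<inter> X"
    using X(2) \<open>open U\<close> unfolding continuous_on_open_invariant by blast
  (* f maps W into U, so the orbit leaves W only into closure U, which misses omega(x) - C *)
  define W where "W = U \<inter> A"
  have "open W"
    unfolding W_def using \<open>open U\<close> \<open>open A\<close> by blast
  have "C \<subseteq> W"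
    using C(2,3) \<omega>_X A \<open>C \<subseteq> U\<close> unfolding W_def by blast
  have "f ` (W \<inter> X) \<subseteq> closure U"
    using A closure_subset[of U] unfolding W_def by blast
  moreover obtain c where "c \<in> C"
    using C(4) by blast
  then have "\<exists>\<^sub>F n in sequentially. (f ^^ n) x \<in> W"
    using C(3) \<open>C \<subseteq> W\<close> \<open>open W\<close> omega_limit_set_iff[of c f x] by blast
  moreover have "\<exists>\<^sub>F n in sequentially. (f ^^ n) x \<notin> W"
  proof -
    have "\<exists>\<^sub>F n in sequentially. (f ^^ n) x \<in> V"
      using d \<open>open V\<close> \<open>?\<omega> - C \<subseteq> V\<close> omega_limit_set_iff[of d f x] by blast
    then show ?thesis
      by (rule frequently_elim1) (use \<open>U \<inter> V = {}\<close> in \<open>auto simp: W_def\<close>)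
  qed
  ultimately obtain z where z: "z \<in> ?\<omega>" "z \<in> closure U" "z \<notin> W"
    using omega_limit_set_meets_exits[OF X(1,3,4) \<open>open W\<close> closed_closure] by blast
  have "closure U \<inter> V = {}"
    using \<open>open V\<close> \<open>U \<inter> V = {}\<close> by (simp add: Int_commute open_Int_closure_eq_empty)
  then have "z \<in> C"
    using z \<open>?\<omega> - C \<subseteq> V\<close> by blast
  then show False
    using z \<open>C \<subseteq> W\<close> by blast
qed

lemma countable_compact_has_isolated_point:
  fixes S :: "'a::t2_space set"
  assumes "compact S" "countable S" "S \<noteq> {}"
  obtains y T where "y \<in> S" "open T" "T \<inter> S = {y}"
proof -
  have "\<exists>y\<in>S. \<exists>T. open T \<and> T \<inter> S = {y}"
  proof (rule ccontr)
    assume no_isolated: "\<not> ?thesis"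
    let ?S = "top_of_set S"
    have "Hausdorff_space ?S" "compact_space ?S"
      using assms(1) Hausdorff_space_euclidean_t2
      by (auto intro: Hausdorff_space_subtopology simp: compact_space_subtopology)
    then have "locally_compact_space ?S \<and> regular_space ?S"
      by (simp add: compact_imp_locally_compact_space compact_Hausdorff_imp_regular_space)
    then have "?S interior_of \<Union>((\<lambda>z. {z}) ` S) = {}"
    proof (rule Baire_category_alt[OF disjI2])
      show "countable ((\<lambda>z. {z}) ` S)"
        using assms(2) by simp
    next
      fix T assume "T \<in> (\<lambda>z. {z}) ` S"
      then obtain z where "z \<in> S" "T = {z}"
        by blast
      moreover have "U = {}" if "openin ?S U" "U \<subseteq> {z}" for U
      proof (rule ccontr)
        assume "U \<noteq> {}"
        obtain V where "open V" "U = S \<inter> V"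
          using \<open>openin ?S U\<close> unfolding openin_open by blast
        then have "V \<inter> S = {z}"
          using \<open>U \<noteq> {}\<close> \<open>U \<subseteq> {z}\<close> by blast
        then show False
          using no_isolated \<open>z \<in> S\<close> \<open>open V\<close> by blast
      qed
      ultimately show "closedin ?S T \<and> ?S interior_of T = {}"
        by (auto simp: closedin_closed interior_of_eq_empty intro: exI[of _ "{z}"])
    qed
    then show False
      using assms(3) by (simp add: interior_of_openin)
  qed
  then show thesis
    using that by blast
qed

lemma continuous_on_funpow:
  assumes "continuous_on S f" "f ` S \<subseteq> S"
  shows "continuous_on S (f ^^ n)"
proof (induction n)
  case (Suc n)
  have "(f ^^ n) ` S \<subseteq> S"
    using orbit_subset_invariant[OF assms(2)] by blast
  then show ?case
    using continuous_on_compose2[OF assms(1) Suc] by (simp add: comp_def)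
qed simp

lemma omega_limit_set_periodic:
  assumes periodic: "\<forall>z\<in>X. z islimpt X \<longrightarrow> periodic_pt f z"
    and X: "closed X" "f ` X \<subseteq> X" "x \<in> X" and w: "w \<in> omega_limit_set f x"
  shows "periodic_pt f w"
proof (cases "w islimpt X")
  case True
  then show ?thesis
    using periodic w omega_limit_set_subset[OF X] by blast
next
  case False
  then show ?thesis
    using periodic_pt_if_isolated_in_omega_limit_set[OF w _ orbit_subset_invariant[OF X(2,3)]] by blast
qed

lemma openin_orbit_isolated_periodic:
  assumes "continuous_on S f" "f ` S \<subseteq> S" "\<And>w. w \<in> S \<Longrightarrow> periodic_pt f w"
    and "y \<in> S" "open T" "T \<inter> S = {y}"
  shows "openin (top_of_set S) (orbit f y)"
proof -
  have orbit_y: "orbit f y = (\<Union>i. S \<inter> (f ^^ i) -` T)"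
  proof (intro equalityI subsetI)
    fix w
    assume "w \<in> orbit f y"
    then have "w \<in> S" "y \<in> orbit f w"
      using orbit_subset_invariant[OF assms(2,4)] periodic_pt_in_orbit[OF assms(3)[OF assms(4)]] by blast+
    then show "w \<in> (\<Union>i. S \<inter> (f ^^ i) -` T)"
      using assms(6) unfolding orbit_def by blast
  next
    fix w
    assume "w \<in> (\<Union>i. S \<inter> (f ^^ i) -` T)"
    then obtain i where w: "w \<in> S" "(f ^^ i) w \<in> T"
      by blast
    moreover have "(f ^^ i) w \<in> S"
      using orbit_subset_invariant[OF assms(2) w(1)] by blast
    ultimately have "(f ^^ i) w = y"
      using assms(6) by blast
    then show "w \<in> orbit f y"
      using periodic_pt_in_orbit[OF assms(3)[OF w(1)]] by blast
  qed
  have "openin (top_of_set S) (S \<inter> (f ^^ i) -` T)" for i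
    using continuous_on_funpow[OF assms(1,2)] \<open>open T\<close> by (rule continuous_openin_preimage_gen)
  then show ?thesis
    unfolding orbit_y by blast
qed

lemma omega_limit_set_eq_periodic_orbit:
  fixes f :: "'a::t2_space \<Rightarrow> 'a"
  assumes X: "compact X" "countable X" "continuous_on X f" "f ` X \<subseteq> X"
    and periodic: "\<forall>z\<in>X. z islimpt X \<longrightarrow> periodic_pt f z"
    and x: "x \<in> X" and nonempty: "omega_limit_set f x \<noteq> {}"
  obtains y where "periodic_pt f y" "omega_limit_set f x = orbit f y"
proof -
  let ?\<omega> = "omega_limit_set f x"
  have \<omega>_X: "?\<omega> \<subseteq> X"
    by (rule omega_limit_set_subset[OF compact_imp_closed[OF X(1)] X(4) x])
  have invariant: "f ` ?\<omega> \<subseteq> ?\<omega>"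
    by (rule omega_limit_set_invariant[OF X(3) compact_imp_closed[OF X(1)] X(4) x])
  have periodic_\<omega>: "periodic_pt f w" if "w \<in> ?\<omega>" for w
    by (rule omega_limit_set_periodic[OF periodic compact_imp_closed[OF X(1)] X(4) x that])
  have "compact ?\<omega>"
    using closed_subset_compact[OF X(1) closed_omega_limit_set \<omega>_X] .
  moreover have "countable ?\<omega>"
    using \<omega>_X X(2) countable_subset by blast
  ultimately obtain y T where y: "y \<in> ?\<omega>" and "open T" "T \<inter> ?\<omega> = {y}"
    using countable_compact_has_isolated_point[OF _ _ nonempty] by metis
  have "openin (top_of_set ?\<omega>) (orbit f y)"
    using continuous_on_subset[OF X(3) \<omega>_X] invariant periodic_\<omega> y \<open>open T\<close> \<open>T \<inter> ?\<omega> = {y}\<close>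
    by (rule openin_orbit_isolated_periodic)
  moreover have "closed (orbit f y)"
    using periodic_pt_orbit_finite[OF periodic_\<omega>[OF y]] by (rule finite_imp_closed)
  moreover have "orbit f y \<subseteq> ?\<omega>"
    using orbit_subset_invariant[OF invariant y] .
  ultimately have "?\<omega> = orbit f y"
    using omega_limit_set_eq_invariant_openin[OF X(1,3,4) x _ image_orbit_subset] orbit_refl by blast
  then show thesis
    using that periodic_\<omega>[OF y] by blast
qed

lemma ultrafilter_tendsto_Lim:
  fixes g :: "'b \<Rightarrow> 'a::t2_space"
  assumes "F \<noteq> bot" "\<And>P. eventually P F \<or> eventually (\<lambda>n. \<not> P n) F"
    and "compact S" "eventually (\<lambda>n. g n \<in> S) F"
  shows "(g \<longlongrightarrow> Lim F g) F"
proof -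
  have "filtermap g F \<noteq> bot"
    using assms(1) by (simp add: filtermap_bot_iff)
  moreover have "eventually (\<lambda>y. y \<in> S) (filtermap g F)"
    using assms(4) by (simp add: eventually_filtermap)
  ultimately obtain L where L: "inf (nhds L) (filtermap g F) \<noteq> bot"
    using assms(3) unfolding compact_filter by blast
  have "(g \<longlongrightarrow> L) F"
    unfolding tendsto_def
  proof (intro allI impI)
    fix T
    assume "open T" "L \<in> T"
    show "eventually (\<lambda>n. g n \<in> T) F"
    proof (rule ccontr)
      assume "\<not> eventually (\<lambda>n. g n \<in> T) F"
      then have "eventually (\<lambda>n. g n \<notin> T) F"
        using assms(2) by blast
      moreover have "eventually (\<lambda>y. y \<in> T) (nhds L)"
        using \<open>open T\<close> \<open>L \<in> T\<close> by (rule eventually_nhds_in_open)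
      ultimately have "eventually (\<lambda>y. False) (inf (nhds L) (filtermap g F))"
        unfolding eventually_inf eventually_filtermap
        by (intro exI[of _ "\<lambda>y. y \<in> T"] exI[of _ "\<lambda>y. y \<notin> T"]) auto
      then show False
        using L by (simp add: eventually_False)
    qed
  qed
  then show ?thesis
    using tendsto_Lim[OF assms(1)] by metis
qed

lemma free_ultrafilter_eventually_ge:
  assumes "free_ultrafilter p"
  shows "eventually (\<lambda>n. N \<le> n) p"
proof (induction N)
  case (Suc N)
  have "eventually (\<lambda>n. n \<noteq> N) p"
    using assms unfolding free_ultrafilter_def by blast
  with Suc show ?case
    by eventually_elim auto
qed simp

lemma p_iterate_in_closed:
  fixes f :: "'a::t2_space \<Rightarrow> 'a"
  assumes p: "free_ultrafilter p" and X: "compact X" "f ` X \<subseteq> X" "x \<in> X"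
    and S: "closed S" "eventually (\<lambda>n. (f ^^ n) x \<in> S) p"
  shows "p_iterate p f x \<in> S"
proof -
  have "p \<noteq> bot" "\<And>P. eventually P p \<or> eventually (\<lambda>n. \<not> P n) p"
    using p unfolding free_ultrafilter_def by blast+
  moreover have "eventually (\<lambda>n. (f ^^ n) x \<in> X) p"
    using orbit_subset_invariant[OF X(2,3)] by (auto intro: always_eventually)
  ultimately have "((\<lambda>n. (f ^^ n) x) \<longlongrightarrow> p_iterate p f x) p"
    unfolding p_iterate_def by (rule ultrafilter_tendsto_Lim[OF _ _ X(1)])
  then show ?thesis
    by (rule Lim_in_closed_set[OF S \<open>p \<noteq> bot\<close>])
qed

lemma p_iterate_in_omega_limit_set:
  fixes f :: "'a::t2_space \<Rightarrow> 'a"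
  assumes "free_ultrafilter p" "compact X" "f ` X \<subseteq> X" "x \<in> X"
  shows "p_iterate p f x \<in> omega_limit_set f x"
  unfolding omega_limit_set_def
proof
  fix N
  have "eventually (\<lambda>n. (f ^^ n) x \<in> closure ((\<lambda>n. (f ^^ n) x) ` {N..})) p"
    using free_ultrafilter_eventually_ge[OF assms(1), of N]
  proof (rule eventually_mono)
    fix n
    assume "N \<le> n"
    then have "(f ^^ n) x \<in> (\<lambda>n. (f ^^ n) x) ` {N..}"
      by simp
    then show "(f ^^ n) x \<in> closure ((\<lambda>n. (f ^^ n) x) ` {N..})"
      by (rule subsetD[OF closure_subset])
  qed
  then show "p_iterate p f x \<in> closure ((\<lambda>n. (f ^^ n) x) ` {N..})"
    by (rule p_iterate_in_closed[OF assms closed_closure])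
qed

lemma p_iterate_periodic_pt_in_orbit:
  fixes f :: "'a::t2_space \<Rightarrow> 'a"
  assumes "free_ultrafilter p" "compact X" "f ` X \<subseteq> X" "x \<in> X" "periodic_pt f x"
  shows "p_iterate p f x \<in> orbit f x"
  using assms(1-4) finite_imp_closed[OF periodic_pt_orbit_finite[OF assms(5)]]
  by (rule p_iterate_in_closed) (auto intro: always_eventually)

theorem theorem3p10:
  fixes X :: "'a::metric_space set" and f :: "'a \<Rightarrow> 'a"
    and a b :: 'a and as :: "nat \<Rightarrow> 'a" and p :: "nat filter"
  assumes "compact X" and "countable X"
    and "continuous_on X f" and "f ` X \<subseteq> X"
    and "\<forall>x\<in>X. x islimpt X \<longrightarrow> periodic_pt f x"
    and "a \<in> X" and "a islimpt X"
    and "\<forall>n. as n \<in> X"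
    and "free_ultrafilter p"
    and "(\<lambda>n. p_iterate p f (as n)) \<longlonglongrightarrow> p_iterate p f a"
    and "b \<in> X" and "periodic_pt f b"
    and "b \<in> (\<Inter>n. closure (orbit f (as n)))"
  shows "b \<in> orbit f a"
proof -
  have "periodic_pt f a"
    using assms(5-7) by blast
  then have q_a: "p_iterate p f a \<in> orbit f a"
    by (rule p_iterate_periodic_pt_in_orbit[OF assms(9,1,4,6)])
  have "omega_limit_set f (as n) = orbit f b" for n
  proof -
    have b: "b \<in> omega_limit_set f (as n)"
      using periodic_pt_in_omega_limit_set[OF assms(12)] assms(13) by blast
    obtain y where "periodic_pt f y" "omega_limit_set f (as n) = orbit f y"
      using omega_limit_set_eq_periodic_orbit[OF assms(1-5) spec[OF assms(8)]] b by blast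
    then show ?thesis
      using periodic_pt_orbit_eq b by metis
  qed
  then have "p_iterate p f (as n) \<in> orbit f b" for n
    using p_iterate_in_omega_limit_set[OF assms(9,1,4) spec[OF assms(8)]] by blast
  then have q_b: "p_iterate p f a \<in> orbit f b"
    using Lim_in_closed_set[OF finite_imp_closed[OF periodic_pt_orbit_finite[OF assms(12)]] _ _ assms(10)]
    by simp
  have "b \<in> orbit f (p_iterate p f a)"
    by (rule periodic_pt_in_orbit[OF assms(12) q_b])
  then show ?thesis
    using orbit_subset_orbit[OF q_a] by blast
qed

end
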